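(* Every locatable digraph $D$ of order $n$ has at most $n-1$ location-forced vertices.
   Context: Digraphs are finite and may contain loops; between two distinct vertices there may be arcs in one or both directions, no repeated arcs. $N^-(v)=\{u: uv\text{ is an arc}\}$ (contains $v$ iff $v$ has a loop). $D$ is locatable if every vertex has at least one in-neighbour and no two distinct vertices have the same in-neighbourhood (equivalently, $D$ admits a set $S$ such that every vertex has an in-neighbour in $S$ and every pair of distinct vertices is distinguished by some vertex of $S$ lying in exactly one of their in-neighbourhoods). A vertex $v$ is location-forced if there are two distinct vertices $x,y$ with $N^-(x)\ominus N^-(y)=\{v\}$ ($\ominus$ = symmetric difference). *)

theory Defs
  imports Main
begin

definition digraph :: "'a set \<Rightarrow> ('a \<times> 'a) set \<Rightarrow> bool" where
  "digraph V A \<longleftrightarrow> finite V \<and> A \<subseteq> V \<times> V"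

definition in_nbhd :: "('a \<times> 'a) set \<Rightarrow> 'a \<Rightarrow> 'a set" where
  "in_nbhd A v = {u. (u, v) \<in> A}"

definition locatable :: "'a set \<Rightarrow> ('a \<times> 'a) set \<Rightarrow> bool" where
  "locatable V A \<longleftrightarrow>
     (\<forall>v\<in>V. in_nbhd A v \<noteq> {}) \<and>
     (\<forall>x\<in>V. \<forall>y\<in>V. x \<noteq> y \<longrightarrow> in_nbhd A x \<noteq> in_nbhd A y)"

definition location_forced :: "'a set \<Rightarrow> ('a \<times> 'a) set \<Rightarrow> 'a \<Rightarrow> bool" where
  "location_forced V A v \<longleftrightarrow>
     (\<exists>x\<in>V. \<exists>y\<in>V. x \<noteq> y \<and>
        (in_nbhd A x - in_nbhd A y) \<union> (in_nbhd A y - in_nbhd A x) = {v})"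

end

theory Submission
  imports Defs
begin

text \<open>Only the family of in-neighbourhoods matters, and locatability makes it a family of
  \<open>card V\<close> distinct sets. For a finite family \<open>F\<close> of sets, split \<open>F\<close> according to membership
  of one element \<open>v\<close> that is the sole difference of two members. Any other such element \<open>u\<close>
  is the sole difference of two members that agree on \<open>v\<close>, hence of two members of the same
  part. Induction gives at most \<open>1 + (card F\<^sub>0 - 1) + (card F\<^sub>1 - 1) = card F - 1\<close> such
  elements.\<close>

definition singleton_differences :: "'b set set \<Rightarrow> 'b set" where
  "singleton_differences F = {v. \<exists>X\<in>F. \<exists>Y\<in>F. sym_diff X Y = {v}}"

lemma finite_singleton_differences:
  assumes "finite F"
  shows "finite (singleton_differences F)"
proof -
  have "singleton_differences F \<subseteq> (\<lambda>(X, Y). the_elem (sym_diff X Y)) ` (F \<times> F)"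
  proof
    fix v assume "v \<in> singleton_differences F"
    then obtain X Y where "X \<in> F" "Y \<in> F" "sym_diff X Y = {v}"
      unfolding singleton_differences_def by blast
    then show "v \<in> (\<lambda>(X, Y). the_elem (sym_diff X Y)) ` (F \<times> F)"
      by (intro image_eqI[where x = "(X, Y)"]) auto
  qed
  then show ?thesis
    using assms finite_subset by blast
qed

lemma singleton_differences_subset_split:
  "singleton_differences F \<subseteq>
     insert v (singleton_differences {X\<in>F. v \<notin> X} \<union> singleton_differences {X\<in>F. v \<in> X})"
proof
  fix u assume "u \<in> singleton_differences F"
  then obtain X Y where XY: "X \<in> F" "Y \<in> F" "sym_diff X Y = {u}"
    unfolding singleton_differences_def by blast
  show "u \<in> insert v (singleton_differences {X\<in>F. v \<notin> X} \<union> singleton_differences {X\<in>F. v \<in> X})"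
  proof (cases "u = v")
    case False
    then have "v \<notin> sym_diff X Y"
      using XY(3) by simp
    then have "v \<in> X \<longleftrightarrow> v \<in> Y"
      by blast
    then show ?thesis
      using XY unfolding singleton_differences_def by blast
  qed simp
qed

lemma card_singleton_differences_le:
  assumes "finite F" "F \<noteq> {}"
  shows "card (singleton_differences F) \<le> card F - 1"
  using assms
proof (induction F rule: finite_psubset_induct)
  case (psubset F)
  show ?case
  proof (cases "singleton_differences F = {}")
    case False
    then obtain v X Y where XY: "X \<in> F" "Y \<in> F" "sym_diff X Y = {v}"
      unfolding singleton_differences_def by blast
    define F\<^sub>0 where "F\<^sub>0 = {X\<in>F. v \<notin> X}"
    define F\<^sub>1 where "F\<^sub>1 = {X\<in>F. v \<in> X}"
    have nonempty: "F\<^sub>0 \<noteq> {}" "F\<^sub>1 \<noteq> {}"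
      using XY unfolding F\<^sub>0_def F\<^sub>1_def by blast+
    have proper: "F\<^sub>0 \<subset> F" "F\<^sub>1 \<subset> F"
      using nonempty unfolding F\<^sub>0_def F\<^sub>1_def by blast+
    have finite: "finite F\<^sub>0" "finite F\<^sub>1"
      using proper psubset.hyps(1) finite_subset by blast+
    have "card F\<^sub>0 > 0" "card F\<^sub>1 > 0"
      using finite nonempty by auto
    have "F = F\<^sub>0 \<union> F\<^sub>1" "F\<^sub>0 \<inter> F\<^sub>1 = {}"
      unfolding F\<^sub>0_def F\<^sub>1_def by auto
    then have card_F: "card F = card F\<^sub>0 + card F\<^sub>1"
      using finite by (simp add: card_Un_disjoint)
    have "card (singleton_differences F)
            \<le> card (insert v (singleton_differences F\<^sub>0 \<union> singleton_differences F\<^sub>1))"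
      using singleton_differences_subset_split[of F v] finite
      by (intro card_mono) (auto simp: F\<^sub>0_def F\<^sub>1_def finite_singleton_differences)
    also have "\<dots> \<le> Suc (card (singleton_differences F\<^sub>0 \<union> singleton_differences F\<^sub>1))"
      using finite by (simp add: card_insert_if finite_singleton_differences)
    also have "\<dots> \<le> Suc (card (singleton_differences F\<^sub>0) + card (singleton_differences F\<^sub>1))"
      using card_Un_le by simp
    also have "\<dots> \<le> Suc ((card F\<^sub>0 - 1) + (card F\<^sub>1 - 1))"
      using psubset.IH proper finite nonempty by (simp add: add_mono)
    also have "\<dots> = card F - 1"
      using card_F \<open>card F\<^sub>0 > 0\<close> \<open>card F\<^sub>1 > 0\<close> by linarith
    finally show ?thesis .
  qed simp
qed

theorem corollary8:
  fixes V :: "'a set" and A :: "('a \<times> 'a) set"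
  assumes "digraph V A" and "locatable V A"
  shows "card {v \<in> V. location_forced V A v} \<le> card V - 1"
proof (cases "V = {}")
  case False
  have "finite V"
    using assms(1) unfolding digraph_def by simp
  have "inj_on (in_nbhd A) V"
    using assms(2) unfolding locatable_def inj_on_def by blast
  have "{v \<in> V. location_forced V A v} \<subseteq> singleton_differences (in_nbhd A ` V)"
    unfolding location_forced_def singleton_differences_def by blast
  then have "card {v \<in> V. location_forced V A v} \<le> card (singleton_differences (in_nbhd A ` V))"
    using \<open>finite V\<close> by (intro card_mono finite_singleton_differences) auto
  also have "\<dots> \<le> card (in_nbhd A ` V) - 1"
    using \<open>finite V\<close> False by (intro card_singleton_differences_le) auto
  also have "card (in_nbhd A ` V) = card V"
    using \<open>inj_on (in_nbhd A) V\<close> by (rule card_image)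
  finally show ?thesis .
qed simp

end
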